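(* (i) Let $H=(V,E,(a,b))$ be an undirected multigraph with output pair in which any two distinct nodes are joined by at most one edge, and let $v\in V\setminus\{a,b\}$ be incident to at least one edge. Then there exists a finite sequence of operations from the node-based bank $\mathcal F_n$ that deletes $v$ and deletes no other node if and only if $v$ has at most $1$ neighbor. (ii) Let $H=(V,E,(a,b))$ be any directed multigraph with output pair and let $v\in V\setminus\{a,b\}$ be incident to at least one edge. Then there exists a finite sequence of operations from the edge-based bank $\mathcal F_e$ that deletes $v$ and deletes no other node if and only if $v$ has at most $2$ neighbors.
   Context: A (directed, resp. undirected) multigraph with output pair is $H=(V,E,(a,b))$ with finite node set $V$, $E$ a finite multiset of ordered (resp. unordered) pairs of nodes (loops and parallel edges allowed), and $a,b\in V$ a distinguished not necessarily distinct pair (the red edge, not in $E$). Two distinct nodes are neighbors if some edge of $E$ joins them. Node-based bank $\mathcal F_n$ (acting on undirected multigraphs): (N1) if $v\notin\{a,b\}$ and the only edge incident to $v$ is a single self-loop, delete $v$ and that loop; (N2) if a node has at least two self-loops, remove one of them; (N3) if $v\notin\{a,b\}$ has no self-loop and exactly one incident edge $\{v,u\}$, $u\ne v$, delete $v$ and that edge and add a self-loop at $u$; (N4) if $v\notin\{a,b\}$ has exactly one self-loop and exactly one other incident edge $\{v,u\}$, $u\neq v$, delete $v$ and its edges and add a self-loop at $u$. Edge-based bank $\mathcal F_e$ (acting on directed multigraphs): (E1) as N1; (E2) as N2; (E3) if $v\notin\{a,b\}$ has no self-loop and exactly one incident edge, which is $(v,u)$ with $u\ne v$, delete $v$ and that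 edge and add a self-loop $(u,u)$; (E4) replace a self-loop $(v,v)$ by an edge $(v,u)$ for some node $u\neq v$; (E5) if there are two parallel edges $(u,v),(u,v)$ with $u\ne v$, remove one of them; (E6) replace an edge $(u,v)$, $u\ne v$, by $(v,u)$; (E7) if $w\notin\{a,b\}$ has no self-loop and exactly two incident edges $(u,w)$ and $(w,v)$ with $u,v,w$ pairwise distinct, delete $w$ and these edges and add the edge $(u,v)$. *)

theory Defs
  imports Main "HOL-Library.Multiset" "HOL-Library.Uprod"
begin

(* Undirected multigraph: node set V and multiset E of unordered pairs (Upair u v;
   a self-loop is Upair v v).
   The output pair (a,b) is a fixed parameter, never part of E. *)

definition wf_ugraph :: "'a set \<Rightarrow> 'a uprod multiset \<Rightarrow> 'a \<Rightarrow> 'a \<Rightarrow> bool" where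
  "wf_ugraph V E a b \<longleftrightarrow> finite V \<and> a \<in> V \<and> b \<in> V \<and> (\<forall>e\<in>#E. set_uprod e \<subseteq> V)"

definition wf_dgraph :: "'a set \<Rightarrow> ('a \<times> 'a) multiset \<Rightarrow> 'a \<Rightarrow> 'a \<Rightarrow> bool" where
  "wf_dgraph V E a b \<longleftrightarrow> finite V \<and> a \<in> V \<and> b \<in> V \<and> (\<forall>(x,y)\<in>#E. x \<in> V \<and> y \<in> V)"

definition uinc :: "'a uprod multiset \<Rightarrow> 'a \<Rightarrow> 'a uprod multiset" where
  "uinc E v = filter_mset (\<lambda>e. v \<in> set_uprod e) E"

definition dinc :: "('a \<times> 'a) multiset \<Rightarrow> 'a \<Rightarrow> ('a \<times> 'a) multiset" where
  "dinc E v = filter_mset (\<lambda>(x,y). x = v \<or> y = v) E"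

definition uneighbors :: "'a uprod multiset \<Rightarrow> 'a \<Rightarrow> 'a set" where
  "uneighbors E v = {u. u \<noteq> v \<and> Upair v u \<in># E}"

definition dneighbors :: "('a \<times> 'a) multiset \<Rightarrow> 'a \<Rightarrow> 'a set" where
  "dneighbors E v = {u. u \<noteq> v \<and> ((v,u) \<in># E \<or> (u,v) \<in># E)}"

inductive nstep :: "'a \<Rightarrow> 'a \<Rightarrow> 'a set \<times> 'a uprod multiset \<Rightarrow> 'a set \<times> 'a uprod multiset \<Rightarrow> bool"
  for a b where
  N1: "\<lbrakk> v \<in> V; v \<notin> {a,b}; uinc E v = {#Upair v v#} \<rbrakk>
       \<Longrightarrow> nstep a b (V, E) (V - {v}, E - {#Upair v v#})"
| N2: "\<lbrakk> v \<in> V; count E (Upair v v) \<ge> 2 \<rbrakk>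
       \<Longrightarrow> nstep a b (V, E) (V, E - {#Upair v v#})"
| N3: "\<lbrakk> v \<in> V; v \<notin> {a,b}; u \<noteq> v; uinc E v = {#Upair v u#} \<rbrakk>
       \<Longrightarrow> nstep a b (V, E) (V - {v}, E - {#Upair v u#} + {#Upair u u#})"
| N4: "\<lbrakk> v \<in> V; v \<notin> {a,b}; u \<noteq> v; uinc E v = {#Upair v v, Upair v u#} \<rbrakk>
       \<Longrightarrow> nstep a b (V, E) (V - {v}, E - {#Upair v v, Upair v u#} + {#Upair u u#})"

inductive estep :: "'a \<Rightarrow> 'a \<Rightarrow> 'a set \<times> ('a \<times> 'a) multiset \<Rightarrow> 'a set \<times> ('a \<times> 'a) multiset \<Rightarrow> bool"
  for a b where
  E1: "\<lbrakk> v \<in> V; v \<notin> {a,b}; dinc E v = {#(v,v)#} \<rbrakk>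
       \<Longrightarrow> estep a b (V, E) (V - {v}, E - {#(v,v)#})"
| E2: "\<lbrakk> v \<in> V; count E (v,v) \<ge> 2 \<rbrakk>
       \<Longrightarrow> estep a b (V, E) (V, E - {#(v,v)#})"
| E3: "\<lbrakk> v \<in> V; v \<notin> {a,b}; u \<noteq> v; dinc E v = {#(v,u)#} \<rbrakk>
       \<Longrightarrow> estep a b (V, E) (V - {v}, E - {#(v,u)#} + {#(u,u)#})"
| E4: "\<lbrakk> v \<in> V; u \<in> V; u \<noteq> v; (v,v) \<in># E \<rbrakk>
       \<Longrightarrow> estep a b (V, E) (V, E - {#(v,v)#} + {#(v,u)#})"
| E5: "\<lbrakk> u \<noteq> v; count E (u,v) \<ge> 2 \<rbrakk>
       \<Longrightarrow> estep a b (V, E) (V, E - {#(u,v)#})"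
| E6: "\<lbrakk> u \<noteq> v; (u,v) \<in># E \<rbrakk>
       \<Longrightarrow> estep a b (V, E) (V, E - {#(u,v)#} + {#(v,u)#})"
| E7: "\<lbrakk> w \<in> V; w \<notin> {a,b}; u \<noteq> v; u \<noteq> w; v \<noteq> w;
         dinc E w = {#(u,w), (w,v)#} \<rbrakk>
       \<Longrightarrow> estep a b (V, E) (V - {w}, E - {#(u,w), (w,v)#} + {#(u,v)#})"

end

theory Submission
  imports Defs
begin

text \<open>Every operation of either bank either keeps the node set and can only enlarge
neighbourhoods, or deletes a single node that has at most one (node bank) resp. two
(edge bank) neighbours. Hence, as long as no node other than \<open>v\<close> is deleted, the
neighbourhood of \<open>v\<close> never shrinks, so \<open>v\<close> can only be deleted if it had few
neighbours from the start. Conversely, the edges at a node of low degree can be normalised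
(surplus loops and parallel copies removed, edges reoriented, loops turned into edges)
until one of the deletion rules N1, N3, N4 resp. E1, E3, E7 applies to it.\<close>

lemma rtranclp_deleted_node_low_degree:
  fixes R :: "'a set \<times> 'g \<Rightarrow> 'a set \<times> 'g \<Rightarrow> bool" and N :: "'g \<Rightarrow> 'a \<Rightarrow> 'a set"
  assumes step: "\<And>V E V' E'. R (V, E) (V', E') \<Longrightarrow>
      V' = V \<and> (\<forall>x. N E x \<subseteq> N E' x) \<or> (\<exists>x\<in>V. V' = V - {x} \<and> finite (N E x) \<and> card (N E x) \<le> k)"
    and steps: "R\<^sup>*\<^sup>* (V, E) (V - {v}, E')" and "v \<in> V"
  shows "card (N E v) \<le> k"
proof -
  have "W \<subseteq> V \<and> (V - {v} \<subseteq> W \<longrightarrow> card (N E v) \<le> k \<or> v \<in> W \<and> N E v \<subseteq> N F v)"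
    if "R\<^sup>*\<^sup>* (V, E) (W, F)" for W F
    using that
  proof (induction W F rule: rtranclp_induct2)
    case refl
    then show ?case using \<open>v \<in> V\<close> by auto
  next
    case (step W F W' F')
    from step.hyps(2) consider "W' = W" "\<forall>x. N F x \<subseteq> N F' x"
      | x where "x \<in> W" "W' = W - {x}" "finite (N F x)" "card (N F x) \<le> k"
      using assms(1) by blast
    then show ?case
    proof cases
      case 1
      then show ?thesis using step.IH by blast
    next
      case (2 x)
      have "card (N E v) \<le> k" if "V - {v} \<subseteq> W'"
      proof -
        have "x = v" "v \<in> W" "N E v \<subseteq> N F v \<or> card (N E v) \<le> k"
          using step.IH that 2 by auto
        then show ?thesis
          using 2 card_mono[of "N F v" "N E v"] by auto
      qed
      then show ?thesis using step.IH 2 by blast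
    qed
  qed
  from this[OF steps] show ?thesis by blast
qed

lemma rtranclp_replace_copies:
  assumes step: "\<And>F. e \<in># F \<Longrightarrow> R (V, F) (V, F - {#e#} + {#e'#})"
  shows "R\<^sup>*\<^sup>* (V, replicate_mset n e + M) (V, replicate_mset n e' + M)"
proof (induction n arbitrary: M)
  case (Suc n)
  have "R (V, replicate_mset (Suc n) e + M) (V, replicate_mset n e + add_mset e' M)"
    using step[of "replicate_mset (Suc n) e + M"] by simp
  also have "R\<^sup>*\<^sup>* \<dots> (V, replicate_mset (Suc n) e' + M)"
    using Suc.IH[of "add_mset e' M"] by simp
  finally show ?case .
qed simp

lemma rtranclp_remove_copies:
  assumes step: "\<And>F. count F e \<ge> 2 \<Longrightarrow> R (V, F) (V, F - {#e#})"
  shows "R\<^sup>*\<^sup>* (V, replicate_mset (Suc n) e + M) (V, add_mset e M)"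
proof (induction n)
  case (Suc n)
  have "R (V, replicate_mset (Suc (Suc n)) e + M) (V, replicate_mset (Suc n) e + M)"
    using step[of "replicate_mset (Suc (Suc n)) e + M"] by simp
  then show ?case using Suc.IH by (rule converse_rtranclp_into_rtranclp)
qed simp

lemma replicate_mset_add: "replicate_mset (m + n) x = replicate_mset m x + replicate_mset n x"
  by (induction m) auto

lemma uneighbors_uinc: "uneighbors E v = uneighbors (uinc E v) v"
  by (auto simp: uneighbors_def uinc_def)

lemma dneighbors_dinc: "dneighbors E v = dneighbors (dinc E v) v"
  by (auto simp: dneighbors_def dinc_def)

lemma dneighbors_mono:
  assumes "\<And>x y. x \<noteq> y \<Longrightarrow> (x,y) \<in># E \<Longrightarrow> (x,y) \<in># E' \<or> (y,x) \<in># E'"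
  shows "dneighbors E z \<subseteq> dneighbors E' z"
proof
  fix y
  assume "y \<in> dneighbors E z"
  then show "y \<in> dneighbors E' z"
    using assms[of z y] assms[of y z] by (auto simp: dneighbors_def)
qed

lemma uinc_add_mset:
  "uinc (add_mset e M) v = (if v \<in> set_uprod e then add_mset e (uinc M v) else uinc M v)"
  by (simp add: uinc_def)

lemma dinc_add_mset:
  "dinc (add_mset (x,y) M) v = (if x = v \<or> y = v then add_mset (x,y) (dinc M v) else dinc M v)"
  by (simp add: dinc_def)

lemma uinc_partition:
  obtains M where "E = uinc E v + M" "uinc M v = {#}"
proof
  let ?M = "{#e \<in># E. v \<notin> set_uprod e#}"
  show "E = uinc E v + ?M"
    unfolding uinc_def by (rule multiset_partition)
  show "uinc ?M v = {#}"
    by (simp add: uinc_def filter_filter_mset)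
qed

lemma dinc_partition:
  obtains M where "E = dinc E v + M" "dinc M v = {#}"
proof
  let ?M = "{#e \<in># E. \<not> (case e of (x,y) \<Rightarrow> x = v \<or> y = v)#}"
  show "E = dinc E v + ?M"
    unfolding dinc_def by (rule multiset_partition)
  show "dinc ?M v = {#}"
    by (auto simp: dinc_def filter_filter_mset)
qed

lemma uinc_decompose:
  assumes "finite U" "v \<notin> U" "uneighbors E v \<subseteq> U"
  shows "uinc E v = replicate_mset (count E (Upair v v)) (Upair v v)
    + (\<Sum>u\<in>U. replicate_mset (count E (Upair v u)) (Upair v u))"
proof (rule multiset_eqI)
  fix e :: "'a uprod"
  show "count (uinc E v) e = count (replicate_mset (count E (Upair v v)) (Upair v v)
    + (\<Sum>u\<in>U. replicate_mset (count E (Upair v u)) (Upair v u))) e"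
  proof (cases "v \<in> set_uprod e")
    case True
    obtain x y where "e = Upair x y"
      by (cases e)
    with True obtain y where e: "e = Upair v y"
      by auto
    have "count E (Upair v y) = 0" if "y \<noteq> v" "y \<notin> U"
      using assms(3) that by (auto simp: uneighbors_def count_eq_zero_iff)
    then show ?thesis
      using assms(1,2) unfolding e
      by (cases "y = v"; cases "y \<in> U") (auto simp: uinc_def count_sum if_distrib)
  next
    case False
    then have "e \<noteq> Upair v u" for u
      by auto
    with False show ?thesis
      by (simp add: uinc_def count_sum)
  qed
qed

lemma dinc_decompose:
  assumes "finite U" "v \<notin> U" "dneighbors E v \<subseteq> U"
  shows "dinc E v = replicate_mset (count E (v,v)) (v,v)
    + (\<Sum>u\<in>U. replicate_mset (count E (v,u)) (v,u) + replicate_mset (count E (u,v)) (u,v))"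
proof (rule multiset_eqI)
  fix e :: "'a \<times> 'a"
  obtain x y where e: "e = (x, y)" by fastforce
  have away: "count E (v,y) = 0" "count E (y,v) = 0" if "y \<noteq> v" "y \<notin> U" for y
    using assms(3) that by (auto simp: dneighbors_def count_eq_zero_iff)
  show "count (dinc E v) e = count (replicate_mset (count E (v,v)) (v,v)
    + (\<Sum>u\<in>U. replicate_mset (count E (v,u)) (v,u) + replicate_mset (count E (u,v)) (u,v))) e"
    using assms(1,2) away unfolding e
    by (cases "x = v"; cases "y = v"; cases "x \<in> U"; cases "y \<in> U")
      (auto simp: dinc_def count_sum sum.distrib if_distrib)
qed

lemma nstep_neighbors:
  assumes "nstep a b (V, E) (V', E')"
  shows "V' = V \<and> (\<forall>x. uneighbors E x \<subseteq> uneighbors E' x)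
    \<or> (\<exists>x\<in>V. V' = V - {x} \<and> finite (uneighbors E x) \<and> card (uneighbors E x) \<le> 1)"
  using assms
proof cases
  case (N1 x)
  then have "uneighbors E x = {}"
    unfolding uneighbors_uinc[of E x] by (auto simp: uneighbors_def)
  then show ?thesis
    using N1 by (intro disjI2 bexI[of _ x]) auto
next
  case (N2 x)
  then show ?thesis by (auto simp: uneighbors_def in_diff_count)
next
  case (N3 x u)
  then have "uneighbors E x = {u}"
    unfolding uneighbors_uinc[of E x] by (auto simp: uneighbors_def)
  then show ?thesis
    using N3 by (intro disjI2 bexI[of _ x]) auto
next
  case (N4 x u)
  then have "uneighbors E x = {u}"
    unfolding uneighbors_uinc[of E x] by (auto simp: uneighbors_def)
  then show ?thesis
    using N4 by (intro disjI2 bexI[of _ x]) auto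
qed

lemma nstep_deleted_node_low_degree:
  "(nstep a b)\<^sup>*\<^sup>* (V, E) (V - {v}, E') \<Longrightarrow> v \<in> V \<Longrightarrow> card (uneighbors E v) \<le> 1"
  by (rule rtranclp_deleted_node_low_degree[OF nstep_neighbors])

lemma nstep_delete_isolated:
  assumes "v \<in> V" "v \<notin> {a,b}" "uinc M v = {#}"
  shows "(nstep a b)\<^sup>*\<^sup>* (V, replicate_mset (Suc n) (Upair v v) + M) (V - {v}, M)"
proof -
  have "(nstep a b)\<^sup>*\<^sup>* (V, replicate_mset (Suc n) (Upair v v) + M) (V, add_mset (Upair v v) M)"
    using \<open>v \<in> V\<close> by (intro rtranclp_remove_copies N2)
  also have "nstep a b \<dots> (V - {v}, M)"
    using N1[where v = v and E = "add_mset (Upair v v) M"] assms by (simp add: uinc_add_mset)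
  finally show ?thesis .
qed

lemma nstep_delete_pendant:
  assumes "v \<in> V" "v \<notin> {a,b}" "u \<noteq> v" "uinc M v = {#}"
  shows "(nstep a b)\<^sup>*\<^sup>* (V, replicate_mset p (Upair v v) + add_mset (Upair v u) M)
    (V - {v}, add_mset (Upair u u) M)"
proof (cases p)
  case 0
  have "nstep a b (V, add_mset (Upair v u) M) (V - {v}, add_mset (Upair u u) M)"
    using N3[where v = v and u = u and E = "add_mset (Upair v u) M"] assms
    by (simp add: uinc_add_mset)
  with 0 show ?thesis
    by (simp add: r_into_rtranclp)
next
  case (Suc n)
  have "(nstep a b)\<^sup>*\<^sup>* (V, replicate_mset (Suc n) (Upair v v) + add_mset (Upair v u) M)
      (V, add_mset (Upair v v) (add_mset (Upair v u) M))"
    using \<open>v \<in> V\<close> by (intro rtranclp_remove_copies N2)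
  also have "nstep a b \<dots> (V - {v}, add_mset (Upair u u) M)"
    using N4[where v = v and u = u and E = "add_mset (Upair v v) (add_mset (Upair v u) M)"] assms
    by (simp add: uinc_add_mset)
  finally show ?thesis
    using Suc by simp
qed

lemma nstep_delete_low_degree:
  assumes wf: "wf_ugraph V E a b"
    and simple: "\<forall>u w. u \<noteq> w \<longrightarrow> count E (Upair u w) \<le> 1"
    and v: "v \<in> V" "v \<notin> {a,b}" and inc: "uinc E v \<noteq> {#}"
    and deg: "card (uneighbors E v) \<le> 1"
  shows "\<exists>E'. (nstep a b)\<^sup>*\<^sup>* (V, E) (V - {v}, E')"
proof -
  obtain M where split: "E = uinc E v + M" and M: "uinc M v = {#}"
    by (rule uinc_partition)
  have "uneighbors E v \<subseteq> V"
    using wf by (fastforce simp: wf_ugraph_def uneighbors_def)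
  then have "finite (uneighbors E v)"
    using wf finite_subset by (auto simp: wf_ugraph_def)
  then consider "uneighbors E v = {}" | u where "uneighbors E v = {u}"
    using deg by (metis card_0_eq card_1_singletonE le_Suc_eq le_zero_eq One_nat_def)
  then show ?thesis
  proof cases
    case 1
    then have d: "uinc E v = replicate_mset (count E (Upair v v)) (Upair v v)"
      using uinc_decompose[of "{}" v E] by simp
    obtain n where "count E (Upair v v) = Suc n"
      using inc d by (metis not0_implies_Suc replicate_mset_0)
    then have "E = replicate_mset (Suc n) (Upair v v) + M"
      by (subst split) (simp add: d)
    then show ?thesis
      using nstep_delete_isolated[OF v M] by blast
  next
    case (2 u)
    then have u: "u \<noteq> v" "Upair v u \<in># E"
      by (auto simp: uneighbors_def)
    then have "count E (Upair v u) = 1"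
      using simple[rule_format, of v u] by (simp add: le_antisym Suc_le_eq)
    then have d: "uinc E v = replicate_mset (count E (Upair v v)) (Upair v v) + {#Upair v u#}"
      using uinc_decompose[of "{u}" v E] 2 u(1) by auto
    have "E = replicate_mset (count E (Upair v v)) (Upair v v) + add_mset (Upair v u) M"
      by (subst split) (simp add: d)
    then show ?thesis
      using nstep_delete_pendant[OF v u(1) M] by metis
  qed
qed

lemma estep_neighbors:
  assumes "estep a b (V, E) (V', E')"
  shows "V' = V \<and> (\<forall>x. dneighbors E x \<subseteq> dneighbors E' x)
    \<or> (\<exists>x\<in>V. V' = V - {x} \<and> finite (dneighbors E x) \<and> card (dneighbors E x) \<le> 2)"
  using assms
proof cases
  case (E1 x)
  then have "dneighbors E x = {}"
    unfolding dneighbors_dinc[of E x] by (auto simp: dneighbors_def)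
  then show ?thesis
    using E1 by (intro disjI2 bexI[of _ x]) auto
next
  case (E2 x)
  then show ?thesis by (auto simp: dneighbors_def in_diff_count)
next
  case (E3 x u)
  then have "dneighbors E x = {u}"
    unfolding dneighbors_dinc[of E x] by (auto simp: dneighbors_def)
  then show ?thesis
    using E3 by (intro disjI2 bexI[of _ x]) auto
next
  case (E4 x u)
  have "(p,q) \<in># E'" if "p \<noteq> q" "(p,q) \<in># E" for p q
    using that E4(2) by (auto simp: in_diff_count)
  then have "dneighbors E z \<subseteq> dneighbors E' z" for z
    by (intro dneighbors_mono) blast
  with E4(1) show ?thesis
    by blast
next
  case (E5 u w)
  have "(p,q) \<in># E'" if "(p,q) \<in># E" for p q
    using that E5 by (cases "(p,q) = (u,w)") (auto simp: in_diff_count)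
  then have "dneighbors E z \<subseteq> dneighbors E' z" for z
    by (intro dneighbors_mono) blast
  with E5(1) show ?thesis
    by blast
next
  case (E6 u w)
  have "(p,q) \<in># E' \<or> (q,p) \<in># E'" if "(p,q) \<in># E" for p q
    using that E6 by (cases "(p,q) = (u,w)") (auto simp: in_diff_count)
  then have "dneighbors E z \<subseteq> dneighbors E' z" for z
    by (intro dneighbors_mono) blast
  with E6(1) show ?thesis
    by blast
next
  case (E7 x u w)
  then have "dneighbors E x = {u, w}"
    unfolding dneighbors_dinc[of E x] by (auto simp: dneighbors_def)
  then show ?thesis
    using E7 by (intro disjI2 bexI[of _ x]) (auto simp: card_insert_if)
qed

lemma estep_deleted_node_low_degree:
  "(estep a b)\<^sup>*\<^sup>* (V, E) (V - {v}, E') \<Longrightarrow> v \<in> V \<Longrightarrow> card (dneighbors E v) \<le> 2"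
  by (rule rtranclp_deleted_node_low_degree[OF estep_neighbors])

lemma estep_delete_isolated:
  assumes "v \<in> V" "v \<notin> {a,b}" "dinc M v = {#}"
  shows "(estep a b)\<^sup>*\<^sup>* (V, replicate_mset (Suc n) (v,v) + M) (V - {v}, M)"
proof -
  have "(estep a b)\<^sup>*\<^sup>* (V, replicate_mset (Suc n) (v,v) + M) (V, add_mset (v,v) M)"
    using \<open>v \<in> V\<close> by (intro rtranclp_remove_copies E2)
  also have "estep a b \<dots> (V - {v}, M)"
    using E1[where v = v and E = "add_mset (v,v) M"] assms by (simp add: dinc_add_mset)
  finally show ?thesis .
qed

lemma estep_delete_pendant:
  assumes "v \<in> V" "v \<notin> {a,b}" "u \<in> V" "u \<noteq> v" "dinc M v = {#}" "q + r > 0"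
  shows "(estep a b)\<^sup>*\<^sup>*
    (V, replicate_mset p (v,v) + replicate_mset q (v,u) + replicate_mset r (u,v) + M)
    (V - {v}, add_mset (u,u) M)"
proof -
  obtain n where n: "p + q + r = Suc n" using \<open>q + r > 0\<close> by (metis add_gr_0 gr0_conv_Suc)
  have "(V, replicate_mset p (v,v) + replicate_mset q (v,u) + replicate_mset r (u,v) + M)
    = (V, replicate_mset r (u,v) + (replicate_mset p (v,v) + replicate_mset q (v,u) + M))"
    by (simp add: ac_simps)
  also have "(estep a b)\<^sup>*\<^sup>* \<dots>
      (V, replicate_mset r (v,u) + (replicate_mset p (v,v) + replicate_mset q (v,u) + M))"
    using \<open>u \<noteq> v\<close> by (intro rtranclp_replace_copies E6)
  also have "\<dots> = (V, replicate_mset p (v,v) + (replicate_mset q (v,u) + replicate_mset r (v,u) + M))"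
    by (simp add: ac_simps)
  also have "(estep a b)\<^sup>*\<^sup>* \<dots>
      (V, replicate_mset p (v,u) + (replicate_mset q (v,u) + replicate_mset r (v,u) + M))"
    using assms by (intro rtranclp_replace_copies E4)
  also have "\<dots> = (V, replicate_mset (Suc n) (v,u) + M)"
    unfolding n[symmetric] replicate_mset_add by (simp add: ac_simps)
  also have "(estep a b)\<^sup>*\<^sup>* \<dots> (V, add_mset (v,u) M)"
    using \<open>u \<noteq> v\<close> by (intro rtranclp_remove_copies E5) auto
  also have "estep a b \<dots> (V - {v}, add_mset (u,u) M)"
    using E3[where v = v and u = u and E = "add_mset (v,u) M"] assms
    by (simp add: dinc_add_mset)
  finally show ?thesis .
qed

lemma estep_delete_degree_two:
  assumes "v \<in> V" "v \<notin> {a,b}" "u \<in> V" "w \<in> V" "u \<noteq> v" "w \<noteq> v" "u \<noteq> w"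
    and "dinc M v = {#}" "q + r > 0" "s + t > 0"
  shows "(estep a b)\<^sup>*\<^sup>*
    (V, replicate_mset p (v,v) + replicate_mset q (v,u) + replicate_mset r (u,v)
        + replicate_mset s (v,w) + replicate_mset t (w,v) + M)
    (V - {v}, add_mset (u,w) M)"
proof -
  obtain m where m: "q + r = Suc m" using \<open>q + r > 0\<close> by (metis gr0_conv_Suc)
  obtain n where n: "p + s + t = Suc n" using \<open>s + t > 0\<close> by (metis add_gr_0 gr0_conv_Suc)
  let ?Rest = "replicate_mset p (v,v) + replicate_mset r (u,v) + replicate_mset s (v,w)
    + replicate_mset t (w,v) + M"
  have "(V, replicate_mset p (v,v) + replicate_mset q (v,u) + replicate_mset r (u,v)
        + replicate_mset s (v,w) + replicate_mset t (w,v) + M)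
    = (V, replicate_mset q (v,u) + ?Rest)"
    by (simp add: ac_simps)
  also have "(estep a b)\<^sup>*\<^sup>* \<dots> (V, replicate_mset q (u,v) + ?Rest)"
    using \<open>u \<noteq> v\<close> by (intro rtranclp_replace_copies E6) auto
  also have "\<dots> = (V, replicate_mset t (w,v)
      + (replicate_mset p (v,v) + replicate_mset (Suc m) (u,v) + replicate_mset s (v,w) + M))"
    unfolding m[symmetric] replicate_mset_add by (simp add: ac_simps)
  also have "(estep a b)\<^sup>*\<^sup>* \<dots> (V, replicate_mset t (v,w)
      + (replicate_mset p (v,v) + replicate_mset (Suc m) (u,v) + replicate_mset s (v,w) + M))"
    using \<open>w \<noteq> v\<close> by (intro rtranclp_replace_copies E6) auto
  also have "\<dots> = (V, replicate_mset p (v,v)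
      + (replicate_mset s (v,w) + replicate_mset t (v,w) + replicate_mset (Suc m) (u,v) + M))"
    by (simp add: ac_simps)
  also have "(estep a b)\<^sup>*\<^sup>* \<dots> (V, replicate_mset p (v,w)
      + (replicate_mset s (v,w) + replicate_mset t (v,w) + replicate_mset (Suc m) (u,v) + M))"
    using assms by (intro rtranclp_replace_copies E4)
  also have "\<dots> = (V, replicate_mset (Suc m) (u,v) + (replicate_mset (Suc n) (v,w) + M))"
    unfolding n[symmetric] replicate_mset_add by (simp add: ac_simps)
  also have "(estep a b)\<^sup>*\<^sup>* \<dots> (V, add_mset (u,v) (replicate_mset (Suc n) (v,w) + M))"
    using \<open>u \<noteq> v\<close> by (intro rtranclp_remove_copies E5) auto
  also have "\<dots> = (V, replicate_mset (Suc n) (v,w) + add_mset (u,v) M)"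
    by simp
  also have "(estep a b)\<^sup>*\<^sup>* \<dots> (V, add_mset (v,w) (add_mset (u,v) M))"
    using \<open>w \<noteq> v\<close> by (intro rtranclp_remove_copies E5) auto
  also have "estep a b \<dots> (V - {v}, add_mset (u,w) M)"
  proof -
    have "dinc (add_mset (v,w) (add_mset (u,v) M)) v = {#(u,v), (v,w)#}"
      using assms by (simp add: dinc_add_mset add_mset_commute)
    then show ?thesis
      using E7[where w = v and u = u and v = w and E = "add_mset (v,w) (add_mset (u,v) M)"] assms
      by (simp add: add_mset_commute)
  qed
  finally show ?thesis .
qed

lemma estep_delete_low_degree:
  assumes wf: "wf_dgraph V E a b" and v: "v \<in> V" "v \<notin> {a,b}"
    and inc: "dinc E v \<noteq> {#}" and deg: "card (dneighbors E v) \<le> 2"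
  shows "\<exists>E'. (estep a b)\<^sup>*\<^sup>* (V, E) (V - {v}, E')"
proof -
  obtain M where split: "E = dinc E v + M" and M: "dinc M v = {#}"
    by (rule dinc_partition)
  have neighbour: "u \<in> V \<and> u \<noteq> v \<and> count E (v,u) + count E (u,v) > 0"
    if "u \<in> dneighbors E v" for u
    using that wf by (auto simp: dneighbors_def wf_dgraph_def)
  then have "finite (dneighbors E v)"
    using wf finite_subset[of "dneighbors E v" V] by (auto simp: wf_dgraph_def)
  then consider "dneighbors E v = {}" | u where "dneighbors E v = {u}"
    | u w where "u \<noteq> w" "dneighbors E v = {u, w}"
    using deg
    by (metis card_0_eq card_1_singletonE card_2_iff le_Suc_eq le_zero_eq One_nat_def numeral_2_eq_2)
  then show ?thesis
  proof cases
    case 1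
    then have d: "dinc E v = replicate_mset (count E (v,v)) (v,v)"
      using dinc_decompose[of "{}" v E] by simp
    obtain n where "count E (v,v) = Suc n"
      using inc d by (metis not0_implies_Suc replicate_mset_0)
    then have "E = replicate_mset (Suc n) (v,v) + M"
      by (subst split) (simp add: d)
    then show ?thesis
      using estep_delete_isolated[OF v M] by blast
  next
    case (2 u)
    then have d: "dinc E v = replicate_mset (count E (v,v)) (v,v)
        + replicate_mset (count E (v,u)) (v,u) + replicate_mset (count E (u,v)) (u,v)"
      using dinc_decompose[of "{u}" v E] neighbour[of u] by (auto simp: ac_simps)
    have "E = replicate_mset (count E (v,v)) (v,v) + replicate_mset (count E (v,u)) (v,u)
        + replicate_mset (count E (u,v)) (u,v) + M"
      by (subst split) (simp add: d)
    then show ?thesis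
      using estep_delete_pendant[OF v _ _ M] neighbour[of u] 2 by (metis insertI1)
  next
    case (3 u w)
    then have d: "dinc E v = replicate_mset (count E (v,v)) (v,v)
        + replicate_mset (count E (v,u)) (v,u) + replicate_mset (count E (u,v)) (u,v)
        + replicate_mset (count E (v,w)) (v,w)
        + replicate_mset (count E (w,v)) (w,v)"
      using dinc_decompose[of "{u,w}" v E] neighbour[of u] neighbour[of w]
      by (auto simp: ac_simps)
    have "E = replicate_mset (count E (v,v)) (v,v) + replicate_mset (count E (v,u)) (v,u)
        + replicate_mset (count E (u,v)) (u,v) + replicate_mset (count E (v,w)) (v,w)
        + replicate_mset (count E (w,v)) (w,v) + M"
      by (subst split) (simp add: d)
    then show ?thesis
      using estep_delete_degree_two[OF v _ _ _ _ \<open>u \<noteq> w\<close> M] neighbour[of u]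
        neighbour[of w] 3
      by (metis insertI1 insertI2)
  qed
qed

theorem lemma1:
  shows "(\<forall>(V::'a set) (E::'a uprod multiset) a b v.
            wf_ugraph V E a b \<and> (\<forall>u w. u \<noteq> w \<longrightarrow> count E (Upair u w) \<le> 1)
            \<and> v \<in> V \<and> v \<notin> {a,b} \<and> uinc E v \<noteq> {#}
            \<longrightarrow> ((\<exists>E'. (nstep a b)\<^sup>*\<^sup>* (V, E) (V - {v}, E')) \<longleftrightarrow> card (uneighbors E v) \<le> 1))
       \<and> (\<forall>(V::'a set) (E::('a \<times> 'a) multiset) a b v.
            wf_dgraph V E a b \<and> v \<in> V \<and> v \<notin> {a,b} \<and> dinc E v \<noteq> {#}
            \<longrightarrow> ((\<exists>E'. (estep a b)\<^sup>*\<^sup>* (V, E) (V - {v}, E')) \<longleftrightarrow> card (dneighbors E v) \<le> 2))"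
proof (intro conjI allI impI)
  fix V :: "'a set" and E :: "'a uprod multiset" and a b v
  assume "wf_ugraph V E a b \<and> (\<forall>u w. u \<noteq> w \<longrightarrow> count E (Upair u w) \<le> 1)
    \<and> v \<in> V \<and> v \<notin> {a,b} \<and> uinc E v \<noteq> {#}"
  then show "(\<exists>E'. (nstep a b)\<^sup>*\<^sup>* (V, E) (V - {v}, E')) \<longleftrightarrow> card (uneighbors E v) \<le> 1"
    using nstep_delete_low_degree[of V E a b v] nstep_deleted_node_low_degree[of a b V E v]
    by blast
next
  fix V :: "'a set" and E :: "('a \<times> 'a) multiset" and a b v
  assume "wf_dgraph V E a b \<and> v \<in> V \<and> v \<notin> {a,b} \<and> dinc E v \<noteq> {#}"
  then show "(\<exists>E'. (estep a b)\<^sup>*\<^sup>* (V, E) (V - {v}, E')) \<longleftrightarrow> card (dneighbors E v) \<le> 2"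
    using estep_delete_low_degree[of V E a b v] estep_deleted_node_low_degree[of a b V E v]
    by blast
qed

end
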